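(* Let $\alpha\in\mathbb{R}^n$ be badly approximable with constant $D=D(\alpha)>0$, i.e. $\max_{1\le j\le n}\min_{a_j\in\mathbb{Z}}|p\alpha_j-a_j|\ge Dp^{-1/n}$ for all $p\in\mathbb{N}$, and let $f$ be a strictly convex norm on $\mathbb{R}^n$. Then there exist $w=w(D,f)\in\mathbb{N}$ and $\delta=\delta(D,f)>0$ such that for every $\nu\ge1$ there is a natural $j$ with $\nu\le j\le\nu+w$ and $$\Xi_{j+1}\notin B_f^{1+\delta}(\Xi_j),$$ where $\Xi_j=\xi_j/f(\xi_j)$, $\xi_j=\alpha p_j-a_j$, and $(p_j,a_j)$ is the $j$-th $f$-best simultaneous approximation to $\alpha$.
   Context: A norm $f$ here is a continuous function $\mathbb{R}^n\to\mathbb{R}_+$ with $f(x)=0\iff x=0$, $f(-x)=f(x)$, $f(tx)=tf(x)$ for $t\ge0$, and convex unit ball $B_f^1=\{y:f(y)\le1\}$ with $0$ in its interior; $f$ is strictly convex if $B_f^1$ is strictly convex (its boundary contains no line segments). $B_f^\lambda(a)=\{y: f(y-a)\le\lambda\}$. For $\alpha\in\mathbb{R}^n$, an $f$-best simultaneous approximation is an integer point $\tau=(p,a_1,\dots,a_n)\in\mathbb{Z}^{n+1}$ with $p\ge1$ such that $f(\alpha q-b)>f(\alpha p-a)$ for all $(q,b)\in\mathbb{Z}^{n+1}$ with $1\le q\le p-1$ and for all $(p,b)$ with $b\ne a$. They form a sequence $(p_\nu,a_\nu)$ with $p_1<p_2<\dots$. *)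

theory Defs
  imports "HOL-Analysis.Analysis"
begin

definition is_norm_fun :: "(real ^ 'n \<Rightarrow> real) \<Rightarrow> bool" where
  "is_norm_fun f \<longleftrightarrow>
     continuous_on UNIV f \<and>
     (\<forall>x. f x \<ge> 0) \<and>
     (\<forall>x. f x = 0 \<longleftrightarrow> x = 0) \<and>
     (\<forall>x. f (- x) = f x) \<and>
     (\<forall>t x. t \<ge> 0 \<longrightarrow> f (t *\<^sub>R x) = t * f x) \<and>
     convex {y. f y \<le> 1} \<and>
     0 \<in> interior {y. f y \<le> 1}"

definition strictly_convex_norm :: "(real ^ 'n \<Rightarrow> real) \<Rightarrow> bool" where
  "strictly_convex_norm f \<longleftrightarrow> is_norm_fun f \<and>
     \<not> (\<exists>x y. x \<noteq> y \<and> closed_segment x y \<subseteq> frontier {z. f z \<le> 1})"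

definition fball :: "(real ^ 'n \<Rightarrow> real) \<Rightarrow> real \<Rightarrow> real ^ 'n \<Rightarrow> (real ^ 'n) set" where
  "fball f l a = {y. f (y - a) \<le> l}"

definition approx_vec :: "real ^ 'n \<Rightarrow> nat \<Rightarrow> int ^ 'n \<Rightarrow> real ^ 'n" where
  "approx_vec \<alpha> q b = (\<chi> i. real q * \<alpha> $ i - of_int (b $ i))"

definition best_approx :: "(real ^ 'n \<Rightarrow> real) \<Rightarrow> real ^ 'n \<Rightarrow> nat \<Rightarrow> int ^ 'n \<Rightarrow> bool" where
  "best_approx f \<alpha> p a \<longleftrightarrow> p \<ge> 1 \<and>
     (\<forall>q b. 1 \<le> q \<and> q \<le> p - 1 \<longrightarrow> f (approx_vec \<alpha> q b) > f (approx_vec \<alpha> p a)) \<and>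
     (\<forall>b. b \<noteq> a \<longrightarrow> f (approx_vec \<alpha> p b) > f (approx_vec \<alpha> p a))"

definition badly_approx_const :: "real ^ 'n \<Rightarrow> real \<Rightarrow> bool" where
  "badly_approx_const \<alpha> D \<longleftrightarrow>
     (\<forall>p::nat. p \<ge> 1 \<longrightarrow>
        Max (range (\<lambda>j. INF a::int. \<bar>real p * \<alpha> $ j - of_int a\<bar>))
          \<ge> D * real p powr (- 1 / real CARD('n)))"

end

theory Submission
  imports Defs
begin

(*
  Write zeta k = f (xi k) with xi k = alpha p_k - a_k. For i < k the difference xi k - xi i has a
  denominator below p_k, so f (xi k - xi i) > zeta k. Rescaled by zeta j, the points xi j, ...,
  xi (j + N) are therefore 1/2-separated in the unit ball, and a packing bound N for that ball
  forces zeta to halve within every N steps; since (1 - 1/(4N))^N >= 3/4, some ratio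
  zeta (k + 1) / zeta k then drops below rho = 1 - 1/(4N).
  Let f >= c on nonzero integer vectors. Once zeta k < c/2, minimising f (alpha q - b) over
  q <= p_(k+1) - p_k produces a best approximation, so f (xi (k + 1) - xi k) >= zeta k: the point
  Xi k - r Xi (k + 1), r = zeta (k + 1) / zeta k < rho, lies outside the open unit ball. By strict
  convexity and compactness of the unit sphere this forces f (Xi k - Xi (k + 1)) > 1 + delta with
  delta depending on f and rho only. As zeta is bounded by a constant depending on f, the
  threshold c/2 is reached after a number of steps depending only on f.
*)

section \<open>Norm functions\<close>

lemma norm_fun_nonneg: "is_norm_fun f \<Longrightarrow> 0 \<le> f x"
  by (simp add: is_norm_fun_def)

lemma norm_fun_eq_0_iff: "is_norm_fun f \<Longrightarrow> f x = 0 \<longleftrightarrow> x = 0"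
  by (simp add: is_norm_fun_def)

lemma norm_fun_pos: "is_norm_fun f \<Longrightarrow> x \<noteq> 0 \<Longrightarrow> 0 < f x"
  using norm_fun_nonneg norm_fun_eq_0_iff by (metis less_eq_real_def)

lemma norm_fun_minus: "is_norm_fun f \<Longrightarrow> f (- x) = f x"
  by (simp add: is_norm_fun_def)

lemma norm_fun_commute: "is_norm_fun f \<Longrightarrow> f (x - y) = f (y - x)"
  using norm_fun_minus[of f "y - x"] by simp

lemma norm_fun_scaleR: "is_norm_fun f \<Longrightarrow> 0 \<le> t \<Longrightarrow> f (t *\<^sub>R x) = t * f x"
  by (simp add: is_norm_fun_def)

lemma norm_fun_continuous_on: "is_norm_fun f \<Longrightarrow> continuous_on S f"
  by (auto simp: is_norm_fun_def intro: continuous_on_subset)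

lemma norm_fun_triangle:
  assumes nf: "is_norm_fun f"
  shows "f (x + y) \<le> f x + f y"
proof (cases "x = 0 \<or> y = 0")
  case True
  then show ?thesis using norm_fun_nonneg[OF nf] by auto
next
  case False
  define A B where "A = f x" and "B = f y"
  have A: "A > 0" and B: "B > 0"
    using False norm_fun_pos[OF nf] by (auto simp: A_def B_def)
  have "f ((1/A) *\<^sub>R x) \<le> 1" "f ((1/B) *\<^sub>R y) \<le> 1"
    using norm_fun_scaleR[OF nf] A B by (simp_all add: A_def B_def)
  moreover have cv: "convex {y. f y \<le> 1}"
    using nf by (simp add: is_norm_fun_def)
  ultimately have "f ((A/(A+B)) *\<^sub>R ((1/A) *\<^sub>R x) + (B/(A+B)) *\<^sub>R ((1/B) *\<^sub>R y)) \<le> 1"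
    using convexD[OF cv, of "(1/A) *\<^sub>R x" "(1/B) *\<^sub>R y" "A/(A+B)" "B/(A+B)"] A B
    by (simp add: add_divide_distrib[symmetric])
  moreover have "(A/(A+B)) *\<^sub>R ((1/A) *\<^sub>R x) + (B/(A+B)) *\<^sub>R ((1/B) *\<^sub>R y) = (1/(A+B)) *\<^sub>R (x + y)"
    using A B by (simp add: scaleR_add_right)
  ultimately have "(1/(A+B)) * f (x + y) \<le> 1"
    using norm_fun_scaleR[OF nf, of "1/(A+B)" "x + y"] A B by simp
  then show ?thesis
    using A B by (simp add: A_def B_def field_simps)
qed

lemma norm_fun_diff_le: "is_norm_fun f \<Longrightarrow> f (x - y) \<le> f x + f y"
  using norm_fun_triangle[of f x "- y"] norm_fun_minus[of f y] by simp

lemma norm_fun_convex_comb: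
  assumes nf: "is_norm_fun f" and "0 \<le> l" "l \<le> 1"
  shows "f ((1 - l) *\<^sub>R x + l *\<^sub>R y) \<le> (1 - l) * f x + l * f y"
  using norm_fun_triangle[OF nf, of "(1 - l) *\<^sub>R x" "l *\<^sub>R y"] norm_fun_scaleR[OF nf] assms(2,3)
  by simp

lemma norm_fun_le_norm:
  assumes nf: "is_norm_fun f"
  obtains C where "C > 0" "\<And>x. f x \<le> C * norm x"
proof -
  have "0 \<in> interior {y. f y \<le> 1}"
    using nf by (simp add: is_norm_fun_def)
  then obtain e where e: "e > 0" "ball 0 e \<subseteq> {y. f y \<le> 1}"
    using mem_interior by blast
  have "f x \<le> (2/e) * norm x" for x
  proof (cases "x = 0")
    case True
    then show ?thesis using norm_fun_eq_0_iff[OF nf, of 0] by simp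
  next
    case False
    then have "(e/(2 * norm x)) *\<^sub>R x \<in> ball 0 e"
      using e by simp
    then have "f ((e/(2 * norm x)) *\<^sub>R x) \<le> 1"
      using e by blast
    then have "(e/(2 * norm x)) * f x \<le> 1"
      using e norm_fun_scaleR[OF nf, of "e/(2 * norm x)" x] by simp
    then show ?thesis
      using e False by (simp add: field_simps)
  qed
  then show thesis
    using e that[of "2/e"] by simp
qed

lemma norm_le_norm_fun:
  fixes f :: "real^'n \<Rightarrow> real"
  assumes nf: "is_norm_fun f"
  obtains c where "c > 0" "\<And>x. c * norm x \<le> f x"
proof -
  obtain b :: "real^'n" where "b \<in> Basis"
    using nonempty_Basis by blast
  then have "sphere (0::real^'n) 1 \<noteq> {}"
    by (metis empty_iff mem_sphere_0 norm_Basis)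
  then obtain x0 where x0: "x0 \<in> sphere (0::real^'n) 1" "\<And>y. y \<in> sphere 0 1 \<Longrightarrow> f x0 \<le> f y"
    using continuous_attains_inf[OF compact_sphere _ norm_fun_continuous_on[OF nf]] by blast
  have "f x0 * norm x \<le> f x" for x
  proof (cases "x = 0")
    case True
    then show ?thesis using norm_fun_eq_0_iff[OF nf, of 0] by simp
  next
    case False
    then have "f x0 \<le> f ((1/norm x) *\<^sub>R x)"
      using x0 by simp
    also have "\<dots> = f x / norm x"
      using norm_fun_scaleR[OF nf, of "1/norm x" x] by simp
    finally show ?thesis
      using False by (simp add: field_simps)
  qed
  moreover have "f x0 > 0"
    using x0(1) norm_fun_pos[OF nf, of x0] by force
  ultimately show thesis
    using that by blast
qed

lemma closed_norm_fun_le: "is_norm_fun f \<Longrightarrow> closed {x. f x \<le> r}"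
  by (intro closed_Collect_le norm_fun_continuous_on continuous_on_const)

lemma compact_norm_fun_ball:
  fixes f :: "real^'n \<Rightarrow> real"
  assumes nf: "is_norm_fun f"
  shows "compact {x. f x \<le> r}"
proof -
  obtain c where c: "c > 0" "\<And>x. c * norm x \<le> f x"
    using norm_le_norm_fun[OF nf] by blast
  have "norm x \<le> r / c" if "f x \<le> r" for x
    using c(2)[of x] that c(1) by (simp add: field_simps mult.commute)
  then have "bounded {x. f x \<le> r}"
    unfolding bounded_iff by blast
  then show ?thesis
    using closed_norm_fun_le[OF nf] by (simp add: compact_eq_bounded_closed)
qed

lemma compact_norm_fun_sphere:
  fixes f :: "real^'n \<Rightarrow> real"
  assumes nf: "is_norm_fun f"
  shows "compact {x. f x = 1}"
proof -
  have "{x. f x = 1} = {x. f x \<le> 1} \<inter> {x. f x = 1}"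
    by auto
  moreover have "closed {x. f x = 1}"
    by (intro closed_Collect_eq norm_fun_continuous_on[OF nf] continuous_on_const)
  ultimately show ?thesis
    using compact_Int_closed compact_norm_fun_ball[OF nf] by metis
qed

lemma norm_fun_eq_1_in_frontier:
  assumes nf: "is_norm_fun f" and fx: "f x = 1"
  shows "x \<in> frontier {z. f z \<le> 1}"
proof -
  have "x \<notin> interior {z. f z \<le> 1}"
  proof
    assume "x \<in> interior {z. f z \<le> 1}"
    then obtain e where e: "e > 0" "ball x e \<subseteq> {z. f z \<le> 1}"
      using mem_interior by blast
    have nx: "norm x > 0"
      using fx norm_fun_eq_0_iff[OF nf, of x] by auto
    let ?y = "(1 + e/(2 * norm x)) *\<^sub>R x"
    have "dist x ?y = e/2"
      using nx e by (simp add: dist_norm algebra_simps)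
    then have "f ?y \<le> 1"
      using e by (auto simp: subset_iff)
    moreover have "f ?y = 1 + e/(2 * norm x)"
      using norm_fun_scaleR[OF nf, of "1 + e/(2 * norm x)" x] fx e nx by simp
    ultimately show False
      using e nx by (simp add: field_simps)
  qed
  then show ?thesis
    using closed_norm_fun_le[OF nf] fx by (simp add: frontier_def)
qed

section \<open>Strict convexity and packing\<close>

lemma norm_fun_ge_1_beyond:
  fixes f :: "real^'n \<Rightarrow> real"
  assumes nf: "is_norm_fun f" and fu: "f u = 1" and r: "0 < r" "r \<le> t"
    and outside: "1 \<le> f (u - r *\<^sub>R v)"
  shows "1 \<le> f (u - t *\<^sub>R v)"
proof -
  define l where "l = r / t"
  have l: "0 < l" "l \<le> 1" "l * t = r"
    using r by (auto simp: l_def)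
  have "u - r *\<^sub>R v = (1 - l) *\<^sub>R u + l *\<^sub>R (u - t *\<^sub>R v)"
    by (simp add: algebra_simps flip: l(3))
  then have "1 \<le> (1 - l) * f u + l * f (u - t *\<^sub>R v)"
    using outside norm_fun_convex_comb[OF nf less_imp_le[OF l(1)] l(2), of u "u - t *\<^sub>R v"]
    by (metis order.trans)
  then have "l * 1 \<le> l * f (u - t *\<^sub>R v)"
    using fu by (simp add: algebra_simps)
  then show ?thesis
    using l(1) by simp
qed

lemma norm_fun_ge_before:
  fixes f :: "real^'n \<Rightarrow> real"
  assumes nf: "is_norm_fun f" and t: "0 \<le> t" "t < r" and r: "r < 1"
    and outside: "1 \<le> f (u - r *\<^sub>R v)" and near: "f (u - v) \<le> 1 + \<delta>" and \<delta>: "0 \<le> \<delta>"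
  shows "1 - \<delta> / (1 - r) \<le> f (u - t *\<^sub>R v)"
proof -
  define l where "l = (r - t) / (1 - t)"
  have l: "0 \<le> l" "l \<le> 1" "(1 - l) * (1 - t) = 1 - r" "l * (1 - t) = r - t"
    using t r by (auto simp: l_def field_simps)
  then have "(1 - l) * t + l = r"
    by (simp add: algebra_simps)
  then have "u - r *\<^sub>R v = (1 - l) *\<^sub>R (u - t *\<^sub>R v) + l *\<^sub>R (u - v)"
    by (simp add: algebra_simps flip: \<open>(1 - l) * t + l = r\<close>)
  then have "1 \<le> (1 - l) * f (u - t *\<^sub>R v) + l * (1 + \<delta>)"
    using outside norm_fun_convex_comb[OF nf l(1,2), of "u - t *\<^sub>R v" "u - v"]
      mult_left_mono[OF near l(1)] by simp
  then have "(1 - l) * (1 - f (u - t *\<^sub>R v)) \<le> l * \<delta>"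
    by (simp add: algebra_simps)
  then have "(1 - l) * (1 - f (u - t *\<^sub>R v)) * (1 - t) \<le> l * \<delta> * (1 - t)"
    using t r by (simp add: mult_right_mono)
  then have "(1 - r) * (1 - f (u - t *\<^sub>R v)) \<le> (r - t) * \<delta>"
    unfolding l(3,4)[symmetric] by (simp add: mult_ac)
  also have "\<dots> \<le> \<delta>"
    using \<delta> r t by (simp add: mult_left_le_one_le)
  finally have "1 - f (u - t *\<^sub>R v) \<le> \<delta> / (1 - r)"
    using r by (simp add: le_divide_eq mult.commute)
  then show ?thesis
    by simp
qed

lemma norm_fun_chord_near_sphere:
  fixes f :: "real^'n \<Rightarrow> real"
  assumes nf: "is_norm_fun f" and fu: "f u = 1"
    and r: "0 < r" "r < 1" and outside: "1 \<le> f (u - r *\<^sub>R v)" and near: "f (u - v) \<le> 1 + \<delta>"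
    and t: "0 \<le> t" "t \<le> 1"
  shows "\<bar>f (u - t *\<^sub>R v) - 1\<bar> \<le> \<delta> / (1 - r)"
proof -
  have "1 \<le> (1 - r) * f u + r * f (u - v)"
    using outside norm_fun_convex_comb[OF nf _ _, of r u "u - v"] r by (simp add: algebra_simps)
  also have "\<dots> \<le> 1 + r * \<delta>"
    using fu near r(1) mult_left_mono[OF near, of r] by (simp add: algebra_simps)
  finally have \<delta>: "0 \<le> \<delta>"
    using r(1) by (simp add: zero_le_mult_iff)
  have "f (u - t *\<^sub>R v) \<le> (1 - t) * f u + t * f (u - v)"
    using norm_fun_convex_comb[OF nf t, of u "u - v"] by (simp add: algebra_simps)
  also have "\<dots> \<le> 1 + \<delta>"
    using fu t mult_left_mono[OF near t(1)] mult_left_le_one_le[OF \<delta> t] by (simp add: algebra_simps)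
  also have "\<dots> \<le> 1 + \<delta> / (1 - r)"
    using r \<delta> by (simp add: le_divide_eq algebra_simps)
  finally have "f (u - t *\<^sub>R v) \<le> 1 + \<delta> / (1 - r)" .
  moreover have "1 - \<delta> / (1 - r) \<le> f (u - t *\<^sub>R v)"
  proof (cases "r \<le> t")
    case True
    then have "1 \<le> f (u - t *\<^sub>R v)"
      by (rule norm_fun_ge_1_beyond[OF nf fu r(1) _ outside])
    moreover have "0 \<le> \<delta> / (1 - r)"
      using \<delta> r by simp
    ultimately show ?thesis
      by linarith
  next
    case False
    then show ?thesis
      using norm_fun_ge_before[OF nf t(1) _ r(2) outside near \<delta>] by simp
  qed
  ultimately show ?thesis
    by (simp add: abs_le_iff)
qed

lemma norm_fun_chord_limit_on_sphere:
  fixes f :: "real^'n \<Rightarrow> real"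
  assumes nf: "is_norm_fun f" and \<rho>: "\<rho> < 1"
    and U: "U \<longlonglongrightarrow> u" and V: "V \<longlonglongrightarrow> v" and \<epsilon>: "\<epsilon> \<longlonglongrightarrow> 0"
    and chords: "\<And>k. f (U k) = 1 \<and> 0 < R k \<and> R k < \<rho> \<and>
      1 \<le> f (U k - R k *\<^sub>R V k) \<and> f (U k - V k) \<le> 1 + \<epsilon> k"
    and t: "0 \<le> t" "t \<le> 1"
  shows "f (u - t *\<^sub>R v) = 1"
proof -
  have "isCont f (u - t *\<^sub>R v)"
    using norm_fun_continuous_on[OF nf, of UNIV] by (simp add: continuous_on_eq_continuous_at)
  moreover have "(\<lambda>k. U k - t *\<^sub>R V k) \<longlonglongrightarrow> u - t *\<^sub>R v"
    by (intro tendsto_diff tendsto_scaleR tendsto_const U V)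
  ultimately have "(\<lambda>k. f (U k - t *\<^sub>R V k)) \<longlonglongrightarrow> f (u - t *\<^sub>R v)"
    by (rule isCont_tendsto_compose)
  then have lim: "(\<lambda>k. \<bar>f (U k - t *\<^sub>R V k) - 1\<bar>) \<longlonglongrightarrow> \<bar>f (u - t *\<^sub>R v) - 1\<bar>"
    by (intro tendsto_rabs tendsto_diff tendsto_const)
  have bound_lim: "(\<lambda>k. \<epsilon> k / (1 - \<rho>)) \<longlonglongrightarrow> 0"
    using \<epsilon> by (rule tendsto_divide_zero)
  have bound: "\<bar>f (U k - t *\<^sub>R V k) - 1\<bar> \<le> \<epsilon> k / (1 - \<rho>)" for k
  proof -
    have "\<bar>f (U k - t *\<^sub>R V k) - 1\<bar> \<le> \<epsilon> k / (1 - R k)"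
      using chords[of k] \<rho> t by (intro norm_fun_chord_near_sphere[OF nf]) auto
    moreover have "0 \<le> \<epsilon> k / (1 - R k)"
      using calculation by linarith
    then have "\<epsilon> k / (1 - R k) \<le> \<epsilon> k / (1 - \<rho>)"
      using chords[of k] \<rho> by (intro divide_left_mono) (auto simp: zero_le_divide_iff)
    ultimately show ?thesis
      by linarith
  qed
  have "\<bar>f (u - t *\<^sub>R v) - 1\<bar> \<le> 0"
    using LIMSEQ_le[OF lim bound_lim] bound by blast
  then show ?thesis
    by simp
qed

definition chord_gap :: "(real^'n \<Rightarrow> real) \<Rightarrow> real \<Rightarrow> real \<Rightarrow> bool" where
  "chord_gap f \<rho> \<delta> \<longleftrightarrow> (\<forall>u v r. f u = 1 \<longrightarrow> f v = 1 \<longrightarrow> 0 < r \<longrightarrow> r < \<rho> \<longrightarrow>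
     1 \<le> f (u - r *\<^sub>R v) \<longrightarrow> 1 + \<delta> < f (u - v))"

lemma strictly_convex_norm_chord_gap:
  fixes f :: "real^'n \<Rightarrow> real"
  assumes sc: "strictly_convex_norm f" and \<rho>: "\<rho> < 1"
  obtains \<delta> where "\<delta> > 0" "chord_gap f \<rho> \<delta>"
proof -
  have nf: "is_norm_fun f"
    using sc by (simp add: strictly_convex_norm_def)
  have "\<exists>\<delta>>0. chord_gap f \<rho> \<delta>"
  proof (rule ccontr)
    assume "\<not> (\<exists>\<delta>>0. chord_gap f \<rho> \<delta>)"
    then have no_gap: "\<not> chord_gap f \<rho> \<delta>" if "\<delta> > 0" for \<delta>
      using that by blast
    define P where "P k u v r \<longleftrightarrow> f u = 1 \<and> f v = 1 \<and> 0 < r \<and> r < \<rho> \<and>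
      1 \<le> f (u - r *\<^sub>R v) \<and> f (u - v) \<le> 1 + inverse (real (Suc k))" for k u v r
    have "\<exists>u v r. P k u v r" for k
      using no_gap[of "inverse (real (Suc k))"] by (auto simp: chord_gap_def P_def not_less)
    then have "\<forall>k. \<exists>w. P k (fst w) (fst (snd w)) (snd (snd w))"
      by simp
    then obtain W where W: "\<And>k. P k (fst (W k)) (fst (snd (W k))) (snd (snd (W k)))"
      by (metis choice)
    define U V R where "U k = fst (W k)" and "V k = fst (snd (W k))" and "R k = snd (snd (W k))"
      for k
    have P: "P k (U k) (V k) (R k)" for k
      using W by (simp add: U_def V_def R_def)
    let ?S = "{x. f x = 1} \<times> {x. f x = 1}"
    have "seq_compact ?S"
      using compact_Times[OF compact_norm_fun_sphere[OF nf] compact_norm_fun_sphere[OF nf]]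
      by (rule compact_imp_seq_compact)
    moreover have "\<forall>k. (U k, V k) \<in> ?S"
      using P by (simp add: P_def)
    ultimately obtain l \<sigma> where "l \<in> ?S" "strict_mono \<sigma>" "((\<lambda>k. (U k, V k)) \<circ> \<sigma>) \<longlonglongrightarrow> l"
      by (rule seq_compactE)
    then obtain u v where uv: "(u, v) \<in> ?S" "strict_mono \<sigma>"
      and lim: "((\<lambda>k. (U k, V k)) \<circ> \<sigma>) \<longlonglongrightarrow> (u, v)"
      by (cases l) auto
    have "(\<lambda>k. inverse (real (Suc (\<sigma> k)))) \<longlonglongrightarrow> 0"
      using LIMSEQ_subseq_LIMSEQ[OF LIMSEQ_inverse_real_of_nat uv(2)] by (simp add: o_def)
    then have on_sphere: "f (u - t *\<^sub>R v) = 1" if "0 \<le> t" "t \<le> 1" for t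
      using tendsto_fst[OF lim] tendsto_snd[OF lim] P \<rho> that
      by (intro norm_fun_chord_limit_on_sphere[OF nf \<rho>, of "U \<circ> \<sigma>" u "V \<circ> \<sigma>" v "\<lambda>k. inverse (real (Suc (\<sigma> k)))" "R \<circ> \<sigma>"])
        (auto simp: o_def P_def)
    have "closed_segment u (u - v) \<subseteq> frontier {z. f z \<le> 1}"
    proof
      fix y
      assume "y \<in> closed_segment u (u - v)"
      then obtain t where "0 \<le> t" "t \<le> 1" "y = u - t *\<^sub>R v"
        unfolding closed_segment_def by (auto simp: algebra_simps)
      then show "y \<in> frontier {z. f z \<le> 1}"
        using on_sphere norm_fun_eq_1_in_frontier[OF nf] by simp
    qed
    moreover have "u \<noteq> u - v"
      using uv(1) norm_fun_eq_0_iff[OF nf, of 0] by auto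
    ultimately show False
      using sc unfolding strictly_convex_norm_def by blast
  qed
  then show thesis
    using that by blast
qed

definition packing_bound :: "(real^'n \<Rightarrow> real) \<Rightarrow> nat \<Rightarrow> bool" where
  "packing_bound f N \<longleftrightarrow> (\<forall>P \<subseteq> {x. f x \<le> 1}.
     (\<forall>x\<in>P. \<forall>y\<in>P. x \<noteq> y \<longrightarrow> 1/2 < f (x - y)) \<longrightarrow> card P \<le> N)"

lemma norm_fun_packing_bound:
  fixes f :: "real^'n \<Rightarrow> real"
  assumes nf: "is_norm_fun f"
  obtains N where "N \<ge> 1" "packing_bound f N"
proof -
  obtain C where C: "C > 0" "\<And>x. f x \<le> C * norm x"
    using norm_fun_le_norm[OF nf] by blast
  define e where "e = 1 / (4 * C)"
  have e: "e > 0"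
    using C by (simp add: e_def)
  let ?B = "{x. f x \<le> 1}"
  have "?B \<subseteq> (\<Union>x\<in>?B. ball x e)"
    using e by auto
  then obtain K where K: "K \<subseteq> ?B" "finite K" "?B \<subseteq> (\<Union>c\<in>K. ball c e)"
    using compactE_image[OF compact_norm_fun_ball[OF nf], of ?B "\<lambda>x. ball x e"] by auto
  have "card P \<le> card K"
    if P: "P \<subseteq> ?B" "\<forall>x\<in>P. \<forall>y\<in>P. x \<noteq> y \<longrightarrow> 1/2 < f (x - y)" for P
  proof -
    have "\<forall>x\<in>P. \<exists>c. c \<in> K \<and> x \<in> ball c e"
      using K(3) P(1) by blast
    then obtain \<phi> where \<phi>: "\<And>x. x \<in> P \<Longrightarrow> \<phi> x \<in> K \<and> x \<in> ball (\<phi> x) e"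
      by metis
    have "inj_on \<phi> P"
    proof (rule inj_onI, rule ccontr)
      fix x y
      assume xy: "x \<in> P" "y \<in> P" "\<phi> x = \<phi> y" "x \<noteq> y"
      then have "norm (x - y) < 2 * e"
        using \<phi>[OF xy(1)] \<phi>[OF xy(2)] dist_triangle_less_add[of x "\<phi> x" e y e]
        by (simp add: dist_commute dist_norm)
      then have "f (x - y) < 1/2"
        using C(1) C(2)[of "x - y"] by (simp add: e_def field_simps)
      then show False
        using P(2) xy by force
    qed
    then show ?thesis
      using \<phi> K(2) by (intro card_inj_on_le) auto
  qed
  then have "packing_bound f (Suc (card K))"
    by (auto simp: packing_bound_def le_Suc_eq)
  then show thesis
    using that[of "Suc (card K)"] by simp
qed

lemma packing_bound_close_pair:
  fixes f :: "real^'n \<Rightarrow> real"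
  assumes nf: "is_norm_fun f" and N: "packing_bound f N" and ball: "\<And>i. i \<le> N \<Longrightarrow> f (X i) \<le> 1"
  obtains i k where "i < k" "k \<le> N" "f (X k - X i) \<le> 1/2"
proof -
  have "\<exists>i k. i < k \<and> k \<le> N \<and> f (X k - X i) \<le> 1/2"
  proof (rule ccontr)
    assume "\<not> (\<exists>i k. i < k \<and> k \<le> N \<and> f (X k - X i) \<le> 1/2)"
    then have sep: "1/2 < f (X k - X i)" if "i < k" "k \<le> N" for i k
      using that by (meson not_le)
    have sep': "1/2 < f (X k - X i)" if "i \<noteq> k" "k \<le> N" "i \<le> N" for i k
    proof (cases "i < k")
      case True
      then show ?thesis
        using sep that by blast
    next
      case False
      then show ?thesis
        using sep[of k i] that norm_fun_commute[OF nf, of "X k" "X i"] by simp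
    qed
    have "inj_on X {0..N}"
    proof (rule inj_onI, rule ccontr)
      fix i k
      assume "i \<in> {0..N}" "k \<in> {0..N}" "X i = X k" "i \<noteq> k"
      then show False
        using sep'[of i k] norm_fun_eq_0_iff[OF nf, of 0] by simp
    qed
    then have "card (X ` {0..N}) = Suc N"
      by (simp add: card_image)
    moreover have "X ` {0..N} \<subseteq> {x. f x \<le> 1}"
      using ball by auto
    moreover have "\<forall>x\<in>X ` {0..N}. \<forall>y\<in>X ` {0..N}. x \<noteq> y \<longrightarrow> 1/2 < f (x - y)"
    proof (intro ballI impI)
      fix x y
      assume "x \<in> X ` {0..N}" "y \<in> X ` {0..N}" "x \<noteq> y"
      then obtain i k where "x = X k" "y = X i" "i \<le> N" "k \<le> N" "i \<noteq> k"
        by (metis atLeastAtMost_iff imageE)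
      then show "1/2 < f (x - y)"
        using sep'[of i k] by simp
    qed
    ultimately show False
      using N unfolding packing_bound_def by (metis Suc_n_not_le_n)
  qed
  then show thesis
    using that by blast
qed

section \<open>Integer points and best approximations\<close>

lemma finite_int_vectors_bounded: "finite {b::int^'n. \<forall>i. \<bar>b $ i\<bar> \<le> L}"
proof -
  have "{b::int^'n. \<forall>i. \<bar>b $ i\<bar> \<le> L} \<subseteq> (\<lambda>g. \<chi> i. g i) ` (\<Pi>\<^sub>E i\<in>UNIV. {-L..L})"
  proof
    fix b :: "int^'n"
    assume "b \<in> {b. \<forall>i. \<bar>b $ i\<bar> \<le> L}"
    then have "(\<lambda>i. b $ i) \<in> (\<Pi>\<^sub>E i\<in>UNIV. {-L..L})"
      by (auto simp: PiE_iff abs_le_iff) (metis minus_le_iff)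
    moreover have "b = (\<chi> i. (\<lambda>i. b $ i) i)"
      by simp
    ultimately show "b \<in> (\<lambda>g. \<chi> i. g i) ` (\<Pi>\<^sub>E i\<in>UNIV. {-L..L})"
      by blast
  qed
  moreover have "finite ((\<lambda>g. \<chi> i. g i) ` (\<Pi>\<^sub>E i\<in>(UNIV::'n set). {-L..L}))"
    by (intro finite_imageI finite_PiE) auto
  ultimately show ?thesis
    by (rule finite_subset)
qed

lemma approx_vec_diff:
  "q' \<le> q \<Longrightarrow> approx_vec \<alpha> q b - approx_vec \<alpha> q' b' = approx_vec \<alpha> (q - q') (b - b')"
  by (simp add: approx_vec_def vec_eq_iff of_nat_diff algebra_simps)

lemma norm_fun_approx_vec_add_ge:
  fixes f :: "real^'n \<Rightarrow> real"
  assumes nf: "is_norm_fun f" and c: "0 \<le> c" "\<And>x. c * norm x \<le> f x" and "b \<noteq> b'"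
  shows "c \<le> f (approx_vec \<alpha> q b) + f (approx_vec \<alpha> q b')"
proof -
  obtain i where i: "b $ i \<noteq> b' $ i"
    using \<open>b \<noteq> b'\<close> by (metis vec_eq_iff)
  have "(approx_vec \<alpha> q b - approx_vec \<alpha> q b') $ i = of_int (b' $ i - b $ i)"
    by (simp add: approx_vec_def)
  moreover have "1 \<le> \<bar>of_int (b' $ i - b $ i) :: real\<bar>"
    using i by linarith
  ultimately have "1 \<le> norm (approx_vec \<alpha> q b - approx_vec \<alpha> q b')"
    by (metis component_le_norm_cart order_trans)
  then have "c \<le> c * norm (approx_vec \<alpha> q b - approx_vec \<alpha> q b')"
    using c(1) by (simp add: mult_le_cancel_left1)
  also have "\<dots> \<le> f (approx_vec \<alpha> q b - approx_vec \<alpha> q b')"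
    by (rule c(2))
  also have "\<dots> \<le> f (approx_vec \<alpha> q b) + f (approx_vec \<alpha> q b')"
    by (rule norm_fun_diff_le[OF nf])
  finally show ?thesis .
qed

lemma finite_approx_vecs_le:
  fixes f :: "real^'n \<Rightarrow> real"
  assumes nf: "is_norm_fun f"
  shows "finite {(q, b). q \<le> Q \<and> f (approx_vec \<alpha> q b) \<le> M}"
proof -
  obtain c where c: "c > 0" "\<And>x. c * norm x \<le> f x"
    using norm_le_norm_fun[OF nf] by blast
  define L where "L = \<lceil>real Q * norm \<alpha> + M / c\<rceil>"
  have "\<bar>b $ i\<bar> \<le> L" if q: "q \<le> Q" and fM: "f (approx_vec \<alpha> q b) \<le> M" for q b i
  proof -
    have "norm (approx_vec \<alpha> q b) \<le> M / c"
      using c(2)[of "approx_vec \<alpha> q b"] fM c(1) by (simp add: field_simps mult.commute)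
    moreover have "\<bar>approx_vec \<alpha> q b $ i\<bar> \<le> norm (approx_vec \<alpha> q b)"
      by (rule component_le_norm_cart)
    moreover have "\<bar>real q * \<alpha> $ i\<bar> \<le> real Q * norm \<alpha>"
      using q by (simp add: abs_mult mult_mono component_le_norm_cart)
    ultimately have "real_of_int \<bar>b $ i\<bar> \<le> real Q * norm \<alpha> + M / c"
      by (simp add: approx_vec_def)
    then show ?thesis
      unfolding L_def by (metis ceiling_mono ceiling_of_int)
  qed
  then have "{(q, b). q \<le> Q \<and> f (approx_vec \<alpha> q b) \<le> M} \<subseteq> {..Q} \<times> {b. \<forall>i. \<bar>b $ i\<bar> \<le> L}"
    by auto
  moreover have "finite ({..Q} \<times> {b::int^'n. \<forall>i. \<bar>b $ i\<bar> \<le> L})"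
    by (intro finite_cartesian_product finite_atMost finite_int_vectors_bounded)
  ultimately show ?thesis
    by (rule finite_subset)
qed

lemma obtain_lex_min_finite:
  fixes F :: "'a \<Rightarrow> 'b::linorder" and g :: "'a \<Rightarrow> 'c::linorder"
  assumes "finite S" "S \<noteq> {}"
  obtains s where "s \<in> S" "\<And>s'. s' \<in> S \<Longrightarrow> F s' \<le> F s \<Longrightarrow> g s \<le> g s'"
proof -
  define M where "M = {s \<in> S. F s = Min (F ` S)}"
  have F_min: "Min (F ` S) \<le> F s'" if "s' \<in> S" for s'
    using assms(1) that by simp
  have "Min (F ` S) \<in> F ` S"
    using assms by simp
  then have M: "finite M" "M \<noteq> {}"
    using assms(1) by (auto simp: M_def)
  then have "Min (g ` M) \<in> g ` M"
    by simp
  then obtain s where s: "s \<in> M" "g s = Min (g ` M)"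
    by auto
  have "g s \<le> g s'" if "s' \<in> S" "F s' \<le> F s" for s'
  proof -
    have "s' \<in> M"
      using that s(1) F_min[OF that(1)] by (auto simp: M_def)
    then show ?thesis
      using M(1) s(2) by simp
  qed
  moreover have "s \<in> S"
    using s(1) by (simp add: M_def)
  ultimately show thesis
    using that by blast
qed

lemma best_approx_exists_le:
  fixes f :: "real^'n \<Rightarrow> real"
  assumes nf: "is_norm_fun f" and c: "0 < c" "\<And>x. c * norm x \<le> f x"
    and q0: "1 \<le> q0" and small: "f (approx_vec \<alpha> q0 b0) < c / 2"
  obtains q b where "best_approx f \<alpha> q b" "q \<le> q0" "f (approx_vec \<alpha> q b) \<le> f (approx_vec \<alpha> q0 b0)"
proof -
  define F where "F s = f (approx_vec \<alpha> (fst s) (snd s))" for s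
  define S where "S = {s. 1 \<le> fst s \<and> fst s \<le> q0 \<and> F s \<le> F (q0, b0)}"
  have "S \<subseteq> {(q, b). q \<le> q0 \<and> f (approx_vec \<alpha> q b) \<le> F (q0, b0)}"
    by (auto simp: S_def F_def)
  then have "finite S"
    using finite_approx_vecs_le[OF nf] by (rule finite_subset)
  moreover have "S \<noteq> {}"
    using q0 by (auto simp: S_def)
  ultimately obtain s where "s \<in> S" and q_min: "\<And>s'. s' \<in> S \<Longrightarrow> F s' \<le> F s \<Longrightarrow> fst s \<le> fst s'"
    using obtain_lex_min_finite[where F = F and g = fst] by blast
  obtain qs bs where qs_bs: "s = (qs, bs)"
    by (cases s)
  have qs: "1 \<le> qs" "qs \<le> q0" and F_le: "F (qs, bs) \<le> F (q0, b0)"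
    using \<open>s \<in> S\<close> by (auto simp: S_def qs_bs)
  have "best_approx f \<alpha> qs bs"
    unfolding best_approx_def
  proof (intro conjI allI impI qs(1))
    fix q b
    assume q: "1 \<le> q \<and> q \<le> qs - 1"
    show "f (approx_vec \<alpha> qs bs) < f (approx_vec \<alpha> q b)"
    proof (rule ccontr)
      assume "\<not> ?thesis"
      then have "F (q, b) \<le> F (qs, bs)"
        by (simp add: F_def)
      moreover from this have "(q, b) \<in> S"
        using q qs F_le by (auto simp: S_def)
      ultimately show False
        using q_min[of "(q, b)"] q by (simp add: qs_bs) linarith
    qed
  next
    fix b
    assume "b \<noteq> bs"
    then have "c \<le> F (qs, b) + F (qs, bs)"
      using norm_fun_approx_vec_add_ge[OF nf _ c(2)] c(1) by (simp add: F_def)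
    \<comment> \<open>as F (qs, bs) < c/2, no other numerator does as well\<close>
    then show "f (approx_vec \<alpha> qs bs) < f (approx_vec \<alpha> qs b)"
      using F_le small by (simp add: F_def)
  qed
  then show thesis
    using that qs(2) F_le by (simp add: F_def)
qed

section \<open>The sequence of best approximations\<close>

locale best_approx_sequence =
  fixes f :: "real^'n \<Rightarrow> real" and \<alpha> :: "real^'n" and p :: "nat \<Rightarrow> nat" and a :: "nat \<Rightarrow> int^'n"
  assumes norm_fun: "is_norm_fun f"
    and strict_mono_p: "strict_mono_on {1..} p"
    and best_approx_p: "\<And>\<nu>. 1 \<le> \<nu> \<Longrightarrow> best_approx f \<alpha> (p \<nu>) (a \<nu>)"
    and best_approx_in_sequence: "\<And>q b. best_approx f \<alpha> q b \<Longrightarrow> \<exists>\<nu>\<ge>1. q = p \<nu> \<and> b = a \<nu>"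
begin

definition xi :: "nat \<Rightarrow> real^'n" where
  "xi k = approx_vec \<alpha> (p k) (a k)"

definition zeta :: "nat \<Rightarrow> real" where
  "zeta k = f (xi k)"

definition Xi :: "nat \<Rightarrow> real^'n" where
  "Xi k = (1 / zeta k) *\<^sub>R xi k"

lemma p_less: "1 \<le> i \<Longrightarrow> i < k \<Longrightarrow> p i < p k"
  using strict_mono_p by (simp add: strict_mono_on_def)

lemma p_ge_1: "1 \<le> i \<Longrightarrow> 1 \<le> p i"
  using best_approx_p by (simp add: best_approx_def)

lemma zeta_less_f_xi_diff:
  assumes "1 \<le> i" "i < k"
  shows "zeta k < f (xi k - xi i)"
proof -
  have "p i < p k"
    using p_less assms by blast
  then have "xi k - xi i = approx_vec \<alpha> (p k - p i) (a k - a i)"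
    by (simp add: xi_def approx_vec_diff)
  moreover have "1 \<le> p k - p i" "p k - p i \<le> p k - 1"
    using \<open>p i < p k\<close> p_ge_1[OF assms(1)] by auto
  ultimately show ?thesis
    using best_approx_p[of k] assms unfolding best_approx_def zeta_def xi_def by auto
qed

lemma zeta_strict_decreasing:
  assumes "1 \<le> i" "i < k"
  shows "zeta k < zeta i"
proof -
  have "1 \<le> p i" "p i \<le> p k - 1"
    using p_less[OF assms] p_ge_1[OF assms(1)] by auto
  then show ?thesis
    using best_approx_p[of k] assms unfolding best_approx_def zeta_def xi_def by auto
qed

lemma zeta_decreasing: "1 \<le> i \<Longrightarrow> i \<le> k \<Longrightarrow> zeta k \<le> zeta i"
  using zeta_strict_decreasing by (cases "i = k") (auto simp: less_le)

lemma zeta_pos: "1 \<le> i \<Longrightarrow> 0 < zeta i"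
  using zeta_strict_decreasing[of i "Suc i"] norm_fun_nonneg[OF norm_fun, of "xi (Suc i)"]
  by (simp add: zeta_def)

lemma f_Xi: "1 \<le> k \<Longrightarrow> f (Xi k) = 1"
  using zeta_pos[of k] norm_fun_scaleR[OF norm_fun, of "1 / zeta k" "xi k"]
  by (simp add: Xi_def zeta_def)

lemma zeta_le_card:
  assumes C: "0 \<le> C" "\<And>x. f x \<le> C * norm x" and i: "1 \<le> i"
  shows "zeta i \<le> C * real CARD('n)"
proof -
  define b :: "int^'n" where "b = (\<chi> k. \<lfloor>real (p i) * \<alpha> $ k\<rfloor>)"
  have "zeta i \<le> f (approx_vec \<alpha> (p i) b)"
    using best_approx_p[OF i] unfolding best_approx_def zeta_def xi_def
    by (cases "b = a i") (auto intro: less_imp_le)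
  also have "\<dots> \<le> C * norm (approx_vec \<alpha> (p i) b)"
    by (rule C(2))
  also have "\<dots> \<le> C * real CARD('n)"
  proof -
    have "\<bar>approx_vec \<alpha> (p i) b $ k\<bar> \<le> 1" for k
      by (simp add: approx_vec_def b_def) linarith
    then have "(\<Sum>k\<in>UNIV. \<bar>approx_vec \<alpha> (p i) b $ k\<bar>) \<le> real CARD('n)"
      using sum_mono[of UNIV "\<lambda>k. \<bar>approx_vec \<alpha> (p i) b $ k\<bar>" "\<lambda>_. 1"] by simp
    then show ?thesis
      using norm_le_l1_cart[of "approx_vec \<alpha> (p i) b"] C(1) by (simp add: mult_left_mono)
  qed
  finally show ?thesis .
qed

lemma zeta_le_f_xi_step:
  assumes c: "0 < c" "\<And>x. c * norm x \<le> f x" and j: "1 \<le> j" and small: "zeta j < c / 2"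
  shows "zeta j \<le> f (xi (Suc j) - xi j)"
proof (rule ccontr)
  define q0 b0 where "q0 = p (Suc j) - p j" and "b0 = a (Suc j) - a j"
  have p_step: "p j < p (Suc j)"
    using p_less j by simp
  assume "\<not> ?thesis"
  then have step: "f (approx_vec \<alpha> q0 b0) < zeta j"
    using p_step by (simp add: xi_def approx_vec_diff q0_def b0_def)
  moreover have "1 \<le> q0"
    using p_step by (simp add: q0_def)
  moreover have "f (approx_vec \<alpha> q0 b0) < c / 2"
    using step small by linarith
  ultimately obtain q b where qb: "best_approx f \<alpha> q b" "q \<le> q0"
    "f (approx_vec \<alpha> q b) \<le> f (approx_vec \<alpha> q0 b0)"
    using best_approx_exists_le[OF norm_fun c] by blast
  then obtain \<nu> where \<nu>: "1 \<le> \<nu>" "q = p \<nu>" "b = a \<nu>"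
    using best_approx_in_sequence by blast
  then have "zeta \<nu> < zeta j"
    using qb(3) step by (simp add: zeta_def xi_def)
  then have "\<not> \<nu> \<le> j"
    using zeta_decreasing[OF \<nu>(1), of j] by linarith
  then have "p (Suc j) \<le> p \<nu>"
    using p_less[of "Suc j" \<nu>] j by (cases "Suc j = \<nu>") auto
  then show False
    using qb(2) \<nu>(2) p_ge_1[OF j] p_step by (simp add: q0_def)
qed

lemma zeta_halves:
  assumes N: "packing_bound f N" and j: "1 \<le> j"
  shows "zeta (j + N) \<le> zeta j / 2"
proof -
  have zj: "0 < zeta j"
    using zeta_pos[OF j] .
  define X where "X i = (1 / zeta j) *\<^sub>R xi (j + i)" for i
  have "f (X i) \<le> 1" if "i \<le> N" for i
    using norm_fun_scaleR[OF norm_fun, of "1 / zeta j" "xi (j + i)"] zj zeta_decreasing[of j "j + i"] j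
    by (simp add: X_def zeta_def)
  then obtain i k where ik: "i < k" "k \<le> N" "f (X k - X i) \<le> 1/2"
    by (rule packing_bound_close_pair[OF norm_fun N, where X = X])
  have "X k - X i = (1 / zeta j) *\<^sub>R (xi (j + k) - xi (j + i))"
    by (simp add: X_def scaleR_diff_right)
  then have "f (X k - X i) = f (xi (j + k) - xi (j + i)) / zeta j"
    using norm_fun_scaleR[OF norm_fun, of "1 / zeta j"] zj by simp
  moreover have "zeta (j + N) < f (xi (j + k) - xi (j + i))"
    using zeta_less_f_xi_diff[of "j + i" "j + k"] zeta_decreasing[of "j + k" "j + N"] ik j
    by simp
  ultimately have "zeta (j + N) / zeta j < f (X k - X i)"
    using zj by (simp add: divide_strict_right_mono)
  then have "zeta (j + N) / zeta j < 1/2"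
    using ik(3) by linarith
  then show ?thesis
    using zj by (simp add: field_simps)
qed

lemma zeta_le_power_half:
  assumes "packing_bound f N" and "1 \<le> j"
  shows "zeta (j + t * N) \<le> zeta j / 2 ^ t"
proof (induction t)
  case 0
  then show ?case
    by simp
next
  case (Suc t)
  have "zeta (j + Suc t * N) = zeta ((j + t * N) + N)"
    by (simp add: algebra_simps)
  also have "\<dots> \<le> zeta (j + t * N) / 2"
    using zeta_halves[OF assms(1), of "j + t * N"] assms(2) by simp
  also have "\<dots> \<le> zeta j / 2 ^ Suc t"
    using Suc.IH by simp
  finally show ?case .
qed

lemma exists_contracting_step:
  assumes N: "packing_bound f N" "1 \<le> N" and j0: "1 \<le> j0"
  shows "\<exists>j. j0 \<le> j \<and> j < j0 + N \<and> zeta (Suc j) < (1 - 1 / (4 * real N)) * zeta j"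
proof (rule ccontr)
  define \<rho> where "\<rho> = 1 - 1 / (4 * real N)"
  assume "\<not> ?thesis"
  then have step: "\<rho> * zeta j \<le> zeta (Suc j)" if "j0 \<le> j" "j < j0 + N" for j
    using that by (auto simp: \<rho>_def not_less)
  have \<rho>: "0 \<le> \<rho>"
    using N(2) by (simp add: \<rho>_def field_simps)
  have "\<rho> ^ i * zeta j0 \<le> zeta (j0 + i)" if "i \<le> N" for i
    using that
  proof (induction i)
    case 0
    then show ?case
      by simp
  next
    case (Suc i)
    then have "\<rho> ^ Suc i * zeta j0 \<le> \<rho> * zeta (j0 + i)"
      using \<rho> by (simp add: mult_left_mono mult.assoc)
    also have "\<dots> \<le> zeta (j0 + Suc i)"
      using step[of "j0 + i"] Suc.prems by simp
    finally show ?case .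
  qed
  then have "\<rho> ^ N * zeta j0 \<le> zeta (j0 + N)"
    by simp
  moreover have "3/4 \<le> \<rho> ^ N"
    using Bernoulli_inequality[of "- 1 / (4 * real N)" N] N(2) by (simp add: \<rho>_def)
  ultimately have "3/4 * zeta j0 \<le> zeta (j0 + N)"
    using mult_right_mono[of "3/4" "\<rho> ^ N" "zeta j0"] zeta_pos[OF j0] by linarith
  then show False
    using zeta_halves[OF N(1) j0] zeta_pos[OF j0] by simp
qed

lemma Xi_step_leaves_ball:
  assumes c: "0 < c" "\<And>x. c * norm x \<le> f x" and gap: "chord_gap f \<rho> \<delta>"
    and j: "1 \<le> j" and small: "zeta j < c / 2" and contracting: "zeta (Suc j) < \<rho> * zeta j"
  shows "Xi (Suc j) \<notin> fball f (1 + \<delta>) (Xi j)"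
proof -
  define r where "r = zeta (Suc j) / zeta j"
  have zj: "0 < zeta j" "0 < zeta (Suc j)"
    using zeta_pos j by auto
  have r: "0 < r" "r < \<rho>"
    using zj contracting by (simp_all add: r_def field_simps)
  have "Xi j - r *\<^sub>R Xi (Suc j) = (1 / zeta j) *\<^sub>R (xi j - xi (Suc j))"
    using zj by (simp add: Xi_def r_def algebra_simps)
  then have "f (Xi j - r *\<^sub>R Xi (Suc j)) = f (xi (Suc j) - xi j) / zeta j"
    using norm_fun_scaleR[OF norm_fun, of "1 / zeta j"] norm_fun_commute[OF norm_fun, of "xi j"] zj
    by simp
  then have "1 \<le> f (Xi j - r *\<^sub>R Xi (Suc j))"
    using zeta_le_f_xi_step[OF c j small] zj by simp
  then have "1 + \<delta> < f (Xi j - Xi (Suc j))"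
    using gap f_Xi[OF j] f_Xi[of "Suc j"] r j unfolding chord_gap_def by simp
  then show ?thesis
    using norm_fun_commute[OF norm_fun] by (simp add: fball_def)
qed

lemma exists_Xi_step_leaves_ball:
  fixes c C :: real
  assumes c: "0 < c" "\<And>x. c * norm x \<le> f x" and C: "0 \<le> C" "\<And>x. f x \<le> C * norm x"
    and N: "packing_bound f N" "1 \<le> N" and gap: "chord_gap f (1 - 1 / (4 * real N)) \<delta>"
    and T: "C * CARD('n) / 2 ^ T < c / 2" and \<nu>: "1 \<le> \<nu>"
  shows "\<exists>j. \<nu> \<le> j \<and> j \<le> \<nu> + (T * N + N) \<and> Xi (Suc j) \<notin> fball f (1 + \<delta>) (Xi j)"
proof -
  define j0 where "j0 = \<nu> + T * N"
  have "zeta j0 \<le> zeta \<nu> / 2 ^ T"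
    using zeta_le_power_half[OF N(1) \<nu>] by (simp add: j0_def)
  also have "\<dots> \<le> C * CARD('n) / 2 ^ T"
    using zeta_le_card[OF C \<nu>] by (simp add: divide_right_mono)
  finally have small: "zeta j0 < c / 2"
    using T by linarith
  have "1 \<le> j0"
    using \<nu> by (simp add: j0_def)
  then obtain j where j: "j0 \<le> j" "j < j0 + N" "zeta (Suc j) < (1 - 1 / (4 * real N)) * zeta j"
    using exists_contracting_step[OF N] by blast
  moreover have "zeta j < c / 2"
    using zeta_decreasing[of j0 j] small j(1) \<nu> by (simp add: j0_def)
  ultimately have "Xi (Suc j) \<notin> fball f (1 + \<delta>) (Xi j)"
    using Xi_step_leaves_ball[OF c gap] \<nu> by (simp add: j0_def)
  then show ?thesis
    using j by (intro exI[of _ j]) (simp add: j0_def)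
qed

end

theorem theorem2p5:
  fixes D :: real and f :: "real ^ 'n \<Rightarrow> real"
  assumes "D > 0" and "strictly_convex_norm f"
  shows "\<exists>w::nat. \<exists>\<delta>>0. \<forall>(\<alpha>::real ^ 'n) (p::nat \<Rightarrow> nat) (a::nat \<Rightarrow> int ^ 'n).
     badly_approx_const \<alpha> D \<longrightarrow>
     strict_mono_on {1..} p \<longrightarrow>
     (\<forall>\<nu>\<ge>1. best_approx f \<alpha> (p \<nu>) (a \<nu>)) \<longrightarrow>
     (\<forall>q b. best_approx f \<alpha> q b \<longrightarrow> (\<exists>\<nu>\<ge>1. q = p \<nu> \<and> b = a \<nu>)) \<longrightarrow>
     (\<forall>\<nu>\<ge>1. \<exists>j. \<nu> \<le> j \<and> j \<le> \<nu> + w \<and>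
        (let \<Xi> = (\<lambda>k. (1 / f (approx_vec \<alpha> (p k) (a k))) *\<^sub>R approx_vec \<alpha> (p k) (a k))
         in \<Xi> (j + 1) \<notin> fball f (1 + \<delta>) (\<Xi> j)))"
proof -
  have nf: "is_norm_fun f"
    using assms(2) by (simp add: strictly_convex_norm_def)
  obtain c where c: "0 < c" "\<And>x. c * norm x \<le> f x"
    using norm_le_norm_fun[OF nf] by blast
  obtain C where C: "0 < C" "\<And>x. f x \<le> C * norm x"
    using norm_fun_le_norm[OF nf] by blast
  obtain N where N: "1 \<le> N" "packing_bound f N"
    using norm_fun_packing_bound[OF nf] by blast
  obtain \<delta> where \<delta>: "0 < \<delta>" "chord_gap f (1 - 1 / (4 * real N)) \<delta>"
    using strictly_convex_norm_chord_gap[OF assms(2), of "1 - 1 / (4 * real N)"] N(1) by auto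
  obtain T where "C * CARD('n) / (c / 2) < 2 ^ T"
    using real_arch_pow[of 2] by auto
  then have T: "C * CARD('n) / 2 ^ T < c / 2"
    using c(1) by (simp add: field_simps)
  show ?thesis
  proof (rule exI[of _ "T * N + N"], rule exI[of _ \<delta>], intro conjI \<delta>(1) allI impI)
    fix \<alpha> :: "real^'n" and p :: "nat \<Rightarrow> nat" and a :: "nat \<Rightarrow> int^'n" and \<nu> :: nat
    assume "badly_approx_const \<alpha> D" "strict_mono_on {1..} p" "\<forall>\<nu>\<ge>1. best_approx f \<alpha> (p \<nu>) (a \<nu>)"
      "\<forall>q b. best_approx f \<alpha> q b \<longrightarrow> (\<exists>\<nu>\<ge>1. q = p \<nu> \<and> b = a \<nu>)" "1 \<le> \<nu>"
    then interpret best_approx_sequence f \<alpha> p a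
      using nf by unfold_locales auto
    obtain j where "\<nu> \<le> j" "j \<le> \<nu> + (T * N + N)" "Xi (Suc j) \<notin> fball f (1 + \<delta>) (Xi j)"
      using exists_Xi_step_leaves_ball[OF c less_imp_le[OF C(1)] C(2) N(2,1) \<delta>(2) T \<open>1 \<le> \<nu>\<close>]
      by blast
    then show "\<exists>j. \<nu> \<le> j \<and> j \<le> \<nu> + (T * N + N) \<and>
        (let \<Xi> = (\<lambda>k. (1 / f (approx_vec \<alpha> (p k) (a k))) *\<^sub>R approx_vec \<alpha> (p k) (a k))
         in \<Xi> (j + 1) \<notin> fball f (1 + \<delta>) (\<Xi> j))"
      unfolding Let_def Xi_def zeta_def xi_def by auto
  qed
qed

end
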